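(* Let $\psi(x)=-2\pi\sin(2\pi x)$, $b\ge2$ an integer, $\gamma\in(1/b,1)$. Let $x^*\in[0,1/2]$ and $0\le k<l<b$ with $(k,l)\in E(1,x^* )$. Then for any $\kappa\in(0,1)$, either $$\Big|\cos\tfrac{2\pi(x^*+k)}{b}-\cos\tfrac{2\pi(x^*+l)}{b}\Big|\le\frac{2\gamma\sqrt{1-\kappa^2}}{b}+\frac{2\gamma^2}{b(b-\gamma)},$$ or $$\Big|\sin\tfrac{2\pi(x^*+k)}{b}-\sin\tfrac{2\pi(x^*+l)}{b}\Big|\le2\kappa\gamma+\frac{2\gamma^2}{1-\gamma}.$$
   Context: $\mathcal{A}=\{0,\dots,b-1\}$. $S(x,\mathbf{i})=\sum_{n\ge1}\gamma^{n-1}\psi\big(\frac{x+i_1+i_2b+\cdots+i_nb^{n-1}}{b^n}\big)$ for $\mathbf{i}\in\mathcal{A}^{\mathbb{Z}^+}$, $S'=\partial_xS$. Sequences $\mathbf{i},\mathbf{j}$ are $(\varepsilon,\delta)$-tangent at $x_0$ if $|S(x_0,\mathbf{i})-S(x_0,\mathbf{j})|\le\varepsilon$ and $|S'(x_0,\mathbf{i})-S'(x_0,\mathbf{j})|\le\delta$. $E(1,x_0;\varepsilon,\delta)$ is the set of pairs $(k,l)\in\mathcal{A}\times\mathcal{A}$ such that for some $\mathbf{u},\mathbf{v}\in\mathcal{A}^{\mathbb{Z}^+}$ the sequences $k\mathbf{u},l\mathbf{v}$ are $(\varepsilon,\delta)$-tangent at $x_0$; $E(1,x_0)=\bigcap_{\varepsilon,\delta>0}E(1,x_0;\varepsilon,\delta)$.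 *)

theory Defs
  imports "HOL-Analysis.Analysis"
begin

definition psi :: "real \<Rightarrow> real" where
  "psi x = - 2 * pi * sin (2 * pi * x)"

text \<open>Sequences in A^{Z+} are functions nat => nat; index m corresponds to i_{m+1}.
  S(x,i) = sum_{n>=1} gamma^(n-1) psi((x + i_1 + i_2 b + ... + i_n b^(n-1)) / b^n).\<close>
definition S :: "nat \<Rightarrow> real \<Rightarrow> (real \<Rightarrow> real) \<Rightarrow> real \<Rightarrow> (nat \<Rightarrow> nat) \<Rightarrow> real" where
  "S b \<gamma> \<psi> x i = (\<Sum>n. \<gamma> ^ n * \<psi> ((x + (\<Sum>m<Suc n. real (i m) * real b ^ m)) / real b ^ Suc n))"

definition S' :: "nat \<Rightarrow> real \<Rightarrow> (real \<Rightarrow> real) \<Rightarrow> real \<Rightarrow> (nat \<Rightarrow> nat) \<Rightarrow> real" where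
  "S' b \<gamma> \<psi> x i = deriv (\<lambda>y. S b \<gamma> \<psi> y i) x"

definition seqs :: "nat \<Rightarrow> (nat \<Rightarrow> nat) set" where
  "seqs b = {i. \<forall>n. i n < b}"

definition tangent :: "nat \<Rightarrow> real \<Rightarrow> (real \<Rightarrow> real) \<Rightarrow> real \<Rightarrow> real \<Rightarrow> real \<Rightarrow> (nat \<Rightarrow> nat) \<Rightarrow> (nat \<Rightarrow> nat) \<Rightarrow> bool" where
  "tangent b \<gamma> \<psi> \<epsilon> \<delta> x0 i j \<longleftrightarrow>
     \<bar>S b \<gamma> \<psi> x0 i - S b \<gamma> \<psi> x0 j\<bar> \<le> \<epsilon> \<and> \<bar>S' b \<gamma> \<psi> x0 i - S' b \<gamma> \<psi> x0 j\<bar> \<le> \<delta>"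

definition prepend :: "nat \<Rightarrow> (nat \<Rightarrow> nat) \<Rightarrow> (nat \<Rightarrow> nat)" where
  "prepend k u = case_nat k u"

definition E1_eps :: "nat \<Rightarrow> real \<Rightarrow> (real \<Rightarrow> real) \<Rightarrow> real \<Rightarrow> real \<Rightarrow> real \<Rightarrow> (nat \<times> nat) set" where
  "E1_eps b \<gamma> \<psi> x0 \<epsilon> \<delta> = {(k, l). k < b \<and> l < b \<and>
     (\<exists>u\<in>seqs b. \<exists>v\<in>seqs b. tangent b \<gamma> \<psi> \<epsilon> \<delta> x0 (prepend k u) (prepend l v))}"

definition E1 :: "nat \<Rightarrow> real \<Rightarrow> (real \<Rightarrow> real) \<Rightarrow> real \<Rightarrow> (nat \<times> nat) set" where
  "E1 b \<gamma> \<psi> x0 = (\<Inter>\<epsilon>\<in>{0<..}. \<Inter>\<delta>\<in>{0<..}. E1_eps b \<gamma> \<psi> x0 \<epsilon> \<delta>)"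

end

theory Submission
  imports Defs
begin

text \<open>Write \<open>\<phi>\<^sub>k = 2\<pi>(x + k)/b\<close>. The first two terms of \<open>S(x, k u)\<close> are
  \<open>-2\<pi>(sin \<phi>\<^sub>k + \<gamma> sin \<theta>)\<close> and those of \<open>S'(x, k u)\<close> are \<open>-(4\<pi>\<^sup>2/b)(cos \<phi>\<^sub>k + (\<gamma>/b) cos \<theta>)\<close>,
  where the angle \<open>\<theta>\<close> depends on the second digit; the tails are bounded by geometric series.
  Hence \<open>(\<epsilon>, \<delta>)\<close>-tangency of \<open>k u\<close> and \<open>l v\<close> bounds \<open>|sin \<phi>\<^sub>k - sin \<phi>\<^sub>l|\<close> by
  \<open>\<gamma>(|sin \<theta>| + |sin \<theta>'|)\<close> and \<open>|cos \<phi>\<^sub>k - cos \<phi>\<^sub>l|\<close> by \<open>(\<gamma>/b)(|cos \<theta>| + |cos \<theta>'|)\<close>, up to the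
  tails and \<open>\<epsilon>, \<delta>\<close>. If \<open>|sin \<theta>| + |sin \<theta>'| > 2\<kappa>\<close> then \<open>|cos \<theta>| + |cos \<theta>'| \<le> 2\<surd>(1 - \<kappa>\<^sup>2)\<close>
  by the quadratic-mean inequality, and letting \<open>\<epsilon>, \<delta> \<rightarrow> 0\<close> gives the dichotomy.\<close>

lemma abs_suminf_le_geometric:
  fixes f :: "nat \<Rightarrow> real"
  assumes "\<And>n. \<bar>f n\<bar> \<le> C * q ^ n" "0 \<le> q" "q < 1"
  shows "summable f" "\<bar>suminf f\<bar> \<le> C / (1 - q)"
proof -
  have sg: "summable (\<lambda>n. C * q ^ n)" using assms by (intro summable_mult) simp
  show "summable f"
    by (rule summable_comparison_test[OF _ sg]) (use assms(1) in auto)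
  have sn: "summable (\<lambda>n. norm (f n))"
    by (rule summable_norm_comparison_test[OF _ sg]) (use assms(1) in auto)
  have "\<bar>suminf f\<bar> \<le> (\<Sum>n. norm (f n))" using summable_norm[OF sn] by simp
  also have "\<dots> \<le> (\<Sum>n. C * q ^ n)" by (rule suminf_le) (use assms(1) sn sg in auto)
  also have "\<dots> = C / (1 - q)" using assms by (simp add: suminf_mult suminf_geometric)
  finally show "\<bar>suminf f\<bar> \<le> C / (1 - q)" .
qed

definition S_term :: "nat \<Rightarrow> real \<Rightarrow> (nat \<Rightarrow> nat) \<Rightarrow> real \<Rightarrow> nat \<Rightarrow> real" where
  "S_term b \<gamma> i x n = \<gamma> ^ n * psi ((x + (\<Sum>m<Suc n. real (i m) * real b ^ m)) / real b ^ Suc n)"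

definition S_term_deriv :: "nat \<Rightarrow> real \<Rightarrow> (nat \<Rightarrow> nat) \<Rightarrow> real \<Rightarrow> nat \<Rightarrow> real" where
  "S_term_deriv b \<gamma> i x n = \<gamma> ^ n * (- 4 * pi^2 *
     cos (2 * pi * ((x + (\<Sum>m<Suc n. real (i m) * real b ^ m)) / real b ^ Suc n))) / real b ^ Suc n"

lemma S_eq_suminf_S_term: "S b \<gamma> psi x i = suminf (S_term b \<gamma> i x)"
  unfolding S_def S_term_def ..

lemma S_term_has_derivative:
  assumes "b \<ge> 1"
  shows "((\<lambda>x. S_term b \<gamma> i x n) has_field_derivative S_term_deriv b \<gamma> i x n) (at x)"
  unfolding S_term_def S_term_deriv_def psi_def
  using assms by (auto intro!: derivative_eq_intros simp: power2_eq_square field_simps)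

lemma abs_S_term_le:
  assumes "0 \<le> \<gamma>"
  shows "\<bar>S_term b \<gamma> i x n\<bar> \<le> 2 * pi * \<gamma> ^ n"
proof -
  have "\<bar>psi y\<bar> \<le> 2 * pi" for y
    unfolding psi_def using abs_sin_le_one[of "2*pi*y"] by (simp add: abs_mult)
  then show ?thesis
    unfolding S_term_def abs_mult power_abs abs_of_nonneg[OF assms]
    using assms by (simp add: mult.commute mult_left_mono)
qed

lemma abs_S_term_deriv_le:
  assumes "0 \<le> \<gamma>"
  shows "\<bar>S_term_deriv b \<gamma> i x n\<bar> \<le> 4 * pi^2 * \<gamma> ^ n / real b ^ Suc n"
proof -
  have "\<bar>\<gamma> ^ n * (- 4 * pi^2 * cos y)\<bar> \<le> 4 * pi^2 * \<gamma> ^ n" for y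
    using abs_cos_le_one[of y] assms by (simp add: abs_mult mult.commute mult_left_mono)
  then show ?thesis
    unfolding S_term_deriv_def abs_divide power_abs abs_of_nat by (rule divide_right_mono) simp
qed

lemma summable_S_term:
  assumes "0 \<le> \<gamma>" "\<gamma> < 1"
  shows "summable (S_term b \<gamma> i x)"
  by (rule abs_suminf_le_geometric(1)[of _ "2 * pi" \<gamma>]) (use assms abs_S_term_le in auto)

lemma S_has_derivative:
  assumes "b \<ge> 1" "0 \<le> \<gamma>" "\<gamma> < 1"
  shows "summable (S_term_deriv b \<gamma> i x)"
    and "((\<lambda>y. S b \<gamma> psi y i) has_field_derivative (\<Sum>n. S_term_deriv b \<gamma> i x n)) (at x)"
proof -
  have bound: "norm (S_term_deriv b \<gamma> i y n) \<le> 4 * pi^2 * \<gamma> ^ n" for y n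
  proof -
    have "\<bar>S_term_deriv b \<gamma> i y n\<bar> \<le> 4 * pi^2 * \<gamma> ^ n / real b ^ Suc n"
      using abs_S_term_deriv_le[OF assms(2)] .
    also have "\<dots> \<le> 4 * pi^2 * \<gamma> ^ n / 1"
    proof (rule divide_left_mono)
      show "1 \<le> real b ^ Suc n" using assms(1) by (simp add: one_le_power del: power_Suc)
    qed (use assms in simp_all)
    finally show ?thesis by simp
  qed
  have majorant: "summable (\<lambda>n. 4 * pi^2 * \<gamma> ^ n)"
    using assms by (intro summable_mult) simp
  show "summable (S_term_deriv b \<gamma> i x)"
    using summable_comparison_test[OF _ majorant] bound by blast
  have "uniformly_convergent_on UNIV (\<lambda>n y. \<Sum>k<n. S_term_deriv b \<gamma> i y k)"
    by (rule Weierstrass_m_test'[OF bound majorant])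
  moreover note summable_S_term[OF assms(2,3)]
  ultimately show "((\<lambda>y. S b \<gamma> psi y i) has_field_derivative (\<Sum>n. S_term_deriv b \<gamma> i x n)) (at x)"
    unfolding S_eq_suminf_S_term
    using has_field_derivative_series'(2)[OF convex_UNIV
        S_term_has_derivative[OF assms(1), THEN has_field_derivative_at_within]]
    by auto
qed

lemma S'_eq_suminf_S_term_deriv:
  assumes "b \<ge> 1" "0 \<le> \<gamma>" "\<gamma> < 1"
  shows "S' b \<gamma> psi x i = suminf (S_term_deriv b \<gamma> i x)"
  unfolding S'_def using DERIV_imp_deriv[OF S_has_derivative(2)[OF assms]] .

lemma S_first_two_terms:
  assumes "b \<ge> 1" "0 \<le> \<gamma>" "\<gamma> < 1"
  obtains \<theta> T T' where
    "S b \<gamma> psi x i = - 2 * pi * (sin (2 * pi * (x + real (i 0)) / real b) + \<gamma> * sin \<theta>) + T"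
    "S' b \<gamma> psi x i =
       - (4 * pi^2 / real b) * (cos (2 * pi * (x + real (i 0)) / real b) + \<gamma> / real b * cos \<theta>) + T'"
    "\<bar>T\<bar> \<le> 2 * pi * (\<gamma>^2 / (1 - \<gamma>))"
    "\<bar>T'\<bar> \<le> 4 * pi^2 / real b * (\<gamma>^2 / (real b * (real b - \<gamma>)))"
proof -
  define \<theta> where "\<theta> = 2 * pi * ((x + (\<Sum>m<2. real (i m) * real b ^ m)) / real b ^ 2)"
  define T where "T = (\<Sum>n. S_term b \<gamma> i x (n + 2))"
  define T' where "T' = (\<Sum>n. S_term_deriv b \<gamma> i x (n + 2))"
  have b: "real b \<ge> 1" using assms(1) by simp
  have "S b \<gamma> psi x i = S_term b \<gamma> i x 0 + S_term b \<gamma> i x 1 + T"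
    unfolding S_eq_suminf_S_term T_def
    using suminf_split_initial_segment[OF summable_S_term[OF assms(2,3)], where k=2]
    by (simp add: numeral_2_eq_2 algebra_simps)
  also have "\<dots> = - 2 * pi * (sin (2 * pi * (x + real (i 0)) / real b) + \<gamma> * sin \<theta>) + T"
    unfolding S_term_def psi_def \<theta>_def by (simp add: numeral_2_eq_2 algebra_simps)
  finally have S: "S b \<gamma> psi x i = \<dots>" .
  have "S' b \<gamma> psi x i = S_term_deriv b \<gamma> i x 0 + S_term_deriv b \<gamma> i x 1 + T'"
    unfolding S'_eq_suminf_S_term_deriv[OF assms] T'_def
    using suminf_split_initial_segment[OF S_has_derivative(1)[OF assms], where k=2]
    by (simp add: numeral_2_eq_2 algebra_simps)
  also have "\<dots> = - (4 * pi^2 / real b)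
      * (cos (2 * pi * (x + real (i 0)) / real b) + \<gamma> / real b * cos \<theta>) + T'"
    unfolding S_term_deriv_def \<theta>_def using b by (simp add: numeral_2_eq_2 field_simps)
  finally have S': "S' b \<gamma> psi x i = \<dots>" .
  have T: "\<bar>T\<bar> \<le> 2 * pi * \<gamma>^2 / (1 - \<gamma>)"
    unfolding T_def
  proof (rule abs_suminf_le_geometric(2))
    show "\<bar>S_term b \<gamma> i x (n + 2)\<bar> \<le> 2 * pi * \<gamma>^2 * \<gamma> ^ n" for n
      using abs_S_term_le[OF assms(2), of b i x "n + 2"] by (simp add: power_add power2_eq_square mult_ac)
  qed (use assms in auto)
  have T': "\<bar>T'\<bar> \<le> 4 * pi^2 * \<gamma>^2 / real b ^ 3 / (1 - \<gamma> / real b)"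
    unfolding T'_def
  proof (rule abs_suminf_le_geometric(2))
    fix n
    have "4 * pi^2 * \<gamma> ^ (n + 2) / real b ^ Suc (n + 2) = 4 * pi^2 * \<gamma>^2 / real b ^ 3 * (\<gamma> / real b) ^ n"
      by (simp add: power_add power_divide power2_eq_square power3_eq_cube field_simps)
    then show "\<bar>S_term_deriv b \<gamma> i x (n + 2)\<bar> \<le> 4 * pi^2 * \<gamma>^2 / real b ^ 3 * (\<gamma> / real b) ^ n"
      using abs_S_term_deriv_le[OF assms(2), of b i x "n + 2"] by simp
  qed (use assms b in auto)
  also have "\<dots> = 4 * pi^2 / real b * (\<gamma>^2 / (real b * (real b - \<gamma>)))"
    using assms b by (simp add: field_simps power3_eq_cube power2_eq_square)
  finally show ?thesis
    using that[OF S S'] T by simp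
qed

lemma abs_diff_le_of_close_perturbations:
  fixes p g a a' s s' T T' R e :: real
  assumes "0 < p" "0 \<le> g"
    and "\<bar>(- p * (a + g * s) + T) - (- p * (a' + g * s') + T')\<bar> \<le> e"
    and "\<bar>T\<bar> \<le> p * R" "\<bar>T'\<bar> \<le> p * R"
  shows "\<bar>a - a'\<bar> \<le> e / p + g * (\<bar>s\<bar> + \<bar>s'\<bar>) + 2 * R"
proof -
  have "\<bar>g * (s - s')\<bar> \<le> g * (\<bar>s\<bar> + \<bar>s'\<bar>)"
    using assms(2) by (simp add: abs_mult mult_left_mono abs_triangle_ineq4)
  then have "\<bar>p * (g * (s - s'))\<bar> \<le> p * (g * (\<bar>s\<bar> + \<bar>s'\<bar>))"
    using assms(1) by (simp add: abs_mult)
  moreover have "p * (a - a') = (- p * (a' + g * s') + T') - (- p * (a + g * s) + T)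
      - p * (g * (s - s')) + (T - T')"
    by (simp add: algebra_simps)
  moreover have "\<bar>p * (a - a')\<bar> = p * \<bar>a - a'\<bar>"
    using assms(1) by (simp add: abs_mult)
  ultimately have "p * \<bar>a - a'\<bar> \<le> e + p * (g * (\<bar>s\<bar> + \<bar>s'\<bar>)) + 2 * (p * R)"
    using assms(3-5) by (smt (verit))
  also have "\<dots> = p * (e / p + g * (\<bar>s\<bar> + \<bar>s'\<bar>) + 2 * R)"
    using assms(1) by (simp add: algebra_simps)
  finally show ?thesis using assms(1) by simp
qed

lemma abs_cos_add_abs_cos_le:
  fixes \<theta> \<theta>' \<kappa> :: real
  assumes "0 \<le> \<kappa>" "2 * \<kappa> < \<bar>sin \<theta>\<bar> + \<bar>sin \<theta>'\<bar>"
  shows "\<bar>cos \<theta>\<bar> + \<bar>cos \<theta>'\<bar> \<le> 2 * sqrt (1 - \<kappa>^2)"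
proof -
  have "(\<bar>cos \<theta>\<bar> + \<bar>cos \<theta>'\<bar>)^2 \<le> 2 * ((cos \<theta>)^2 + (cos \<theta>')^2)"
    using sum_squares_ge_zero[of "\<bar>cos \<theta>\<bar> - \<bar>cos \<theta>'\<bar>" 0]
    by (simp add: power2_eq_square algebra_simps)
  also have "\<dots> = 4 - 2 * ((sin \<theta>)^2 + (sin \<theta>')^2)"
    by (simp add: cos_squared_eq)
  also have "\<dots> \<le> 4 - (\<bar>sin \<theta>\<bar> + \<bar>sin \<theta>'\<bar>)^2"
    using sum_squares_ge_zero[of "\<bar>sin \<theta>\<bar> - \<bar>sin \<theta>'\<bar>" 0]
    by (simp add: power2_eq_square algebra_simps)
  also have "\<dots> \<le> 4 - (2 * \<kappa>)^2"
    using assms by (intro diff_left_mono power_mono) auto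
  also have "\<dots> = 2^2 * (1 - \<kappa>^2)"
    by (simp add: power2_eq_square algebra_simps)
  finally have "\<bar>cos \<theta>\<bar> + \<bar>cos \<theta>'\<bar> \<le> sqrt (2^2 * (1 - \<kappa>^2))"
    by (rule real_le_rsqrt)
  then show ?thesis by (subst (asm) real_sqrt_mult) simp
qed

lemma field_le_epsilon_disj:
  fixes a A c C :: real
  assumes "\<And>\<eta>. 0 < \<eta> \<Longrightarrow> a \<le> A + \<eta> \<or> c \<le> C + \<eta>"
  shows "a \<le> A \<or> c \<le> C"
proof (rule ccontr)
  assume contra: "\<not> (a \<le> A \<or> c \<le> C)"
  define \<eta> where "\<eta> = min (a - A) (c - C) / 2"
  have "0 < \<eta>" "\<eta> < a - A" "\<eta> < c - C"
    using contra unfolding \<eta>_def by auto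
  with assms[of \<eta>] show False by linarith
qed

lemma first_digits_bound_of_tangent:
  fixes b k l :: nat and \<gamma> x \<kappa> \<eta> :: real and u v :: "nat \<Rightarrow> nat"
  assumes "b \<ge> 1" "0 \<le> \<gamma>" "\<gamma> < 1" "0 \<le> \<kappa>"
    and "tangent b \<gamma> psi (2 * pi * \<eta>) (4 * pi^2 / real b * \<eta>) x (prepend k u) (prepend l v)"
  shows "\<bar>cos (2*pi*(x + real k) / real b) - cos (2*pi*(x + real l) / real b)\<bar>
           \<le> 2 * \<gamma> * sqrt (1 - \<kappa>^2) / real b + 2 * \<gamma>^2 / (real b * (real b - \<gamma>)) + \<eta>
       \<or> \<bar>sin (2*pi*(x + real k) / real b) - sin (2*pi*(x + real l) / real b)\<bar>
           \<le> 2 * \<kappa> * \<gamma> + 2 * \<gamma>^2 / (1 - \<gamma>) + \<eta>"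
proof -
  have b: "real b \<ge> 1" using assms(1) by simp
  obtain \<theta> T T' where
    S1: "S b \<gamma> psi x (prepend k u) = - 2 * pi * (sin (2*pi*(x + real k) / real b) + \<gamma> * sin \<theta>) + T"
      "S' b \<gamma> psi x (prepend k u) =
         - (4 * pi^2 / real b) * (cos (2*pi*(x + real k) / real b) + \<gamma> / real b * cos \<theta>) + T'"
      "\<bar>T\<bar> \<le> 2 * pi * (\<gamma>^2 / (1 - \<gamma>))"
      "\<bar>T'\<bar> \<le> 4 * pi^2 / real b * (\<gamma>^2 / (real b * (real b - \<gamma>)))"
    using S_first_two_terms[OF assms(1-3), of x "prepend k u"] by (auto simp: prepend_def)
  obtain \<theta>' U U' where
    S2: "S b \<gamma> psi x (prepend l v) = - 2 * pi * (sin (2*pi*(x + real l) / real b) + \<gamma> * sin \<theta>') + U"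
      "S' b \<gamma> psi x (prepend l v) =
         - (4 * pi^2 / real b) * (cos (2*pi*(x + real l) / real b) + \<gamma> / real b * cos \<theta>') + U'"
      "\<bar>U\<bar> \<le> 2 * pi * (\<gamma>^2 / (1 - \<gamma>))"
      "\<bar>U'\<bar> \<le> 4 * pi^2 / real b * (\<gamma>^2 / (real b * (real b - \<gamma>)))"
    using S_first_two_terms[OF assms(1-3), of x "prepend l v"] by (auto simp: prepend_def)
  have "\<bar>sin (2*pi*(x + real k) / real b) - sin (2*pi*(x + real l) / real b)\<bar>
      \<le> 2 * pi * \<eta> / (2 * pi) + \<gamma> * (\<bar>sin \<theta>\<bar> + \<bar>sin \<theta>'\<bar>) + 2 * (\<gamma>^2 / (1 - \<gamma>))"
    using assms(5) S1(3) S2(3) unfolding tangent_def S1(1) S2(1)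
    by (intro abs_diff_le_of_close_perturbations[where T = T and T' = U]) (use assms(2) in auto)
  then have sin: "\<bar>sin (2*pi*(x + real k) / real b) - sin (2*pi*(x + real l) / real b)\<bar>
      \<le> \<eta> + \<gamma> * (\<bar>sin \<theta>\<bar> + \<bar>sin \<theta>'\<bar>) + 2 * \<gamma>^2 / (1 - \<gamma>)"
    by simp
  have "\<bar>cos (2*pi*(x + real k) / real b) - cos (2*pi*(x + real l) / real b)\<bar>
      \<le> 4 * pi^2 / real b * \<eta> / (4 * pi^2 / real b) + \<gamma> / real b * (\<bar>cos \<theta>\<bar> + \<bar>cos \<theta>'\<bar>)
        + 2 * (\<gamma>^2 / (real b * (real b - \<gamma>)))"
    using assms(5) S1(4) S2(4) unfolding tangent_def S1(2) S2(2)
    by (intro abs_diff_le_of_close_perturbations[where T = T' and T' = U']) (use assms(2) b in auto)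
  then have cos: "\<bar>cos (2*pi*(x + real k) / real b) - cos (2*pi*(x + real l) / real b)\<bar>
      \<le> \<eta> + \<gamma> * (\<bar>cos \<theta>\<bar> + \<bar>cos \<theta>'\<bar>) / real b + 2 * \<gamma>^2 / (real b * (real b - \<gamma>))"
    using b by simp
  show ?thesis
  proof (cases "\<bar>sin \<theta>\<bar> + \<bar>sin \<theta>'\<bar> \<le> 2 * \<kappa>")
    case True
    then have "\<gamma> * (\<bar>sin \<theta>\<bar> + \<bar>sin \<theta>'\<bar>) \<le> 2 * \<kappa> * \<gamma>"
      using assms(2) by (simp add: mult_left_mono mult.commute)
    then show ?thesis using sin by simp
  next
    case False
    then have "\<bar>cos \<theta>\<bar> + \<bar>cos \<theta>'\<bar> \<le> 2 * sqrt (1 - \<kappa>^2)"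
      using abs_cos_add_abs_cos_le assms(4) by simp
    then have "\<gamma> * (\<bar>cos \<theta>\<bar> + \<bar>cos \<theta>'\<bar>) / real b \<le> \<gamma> * (2 * sqrt (1 - \<kappa>^2)) / real b"
      using assms(2) by (intro divide_right_mono mult_left_mono) auto
    moreover have "\<gamma> * (2 * sqrt (1 - \<kappa>^2)) / real b = 2 * \<gamma> * sqrt (1 - \<kappa>^2) / real b"
      by simp
    ultimately have "\<bar>cos (2*pi*(x + real k) / real b) - cos (2*pi*(x + real l) / real b)\<bar>
        \<le> 2 * \<gamma> * sqrt (1 - \<kappa>^2) / real b + 2 * \<gamma>^2 / (real b * (real b - \<gamma>)) + \<eta>"
      using cos by argo
    then show ?thesis ..
  qed
qed

theorem lemma4p1:
  fixes b k l :: nat and \<gamma> xs \<kappa> :: real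
  assumes "b \<ge> 2"
    and "1 / real b < \<gamma>" and "\<gamma> < 1"
    and "0 \<le> xs" and "xs \<le> 1/2"
    and "k < l" and "l < b"
    and "(k, l) \<in> E1 b \<gamma> psi xs"
    and "0 < \<kappa>" and "\<kappa> < 1"
  shows "\<bar>cos (2*pi*(xs + real k) / real b) - cos (2*pi*(xs + real l) / real b)\<bar>
           \<le> 2 * \<gamma> * sqrt (1 - \<kappa>^2) / real b + 2 * \<gamma>^2 / (real b * (real b - \<gamma>))
       \<or> \<bar>sin (2*pi*(xs + real k) / real b) - sin (2*pi*(xs + real l) / real b)\<bar>
           \<le> 2 * \<kappa> * \<gamma> + 2 * \<gamma>^2 / (1 - \<gamma>)"
proof (rule field_le_epsilon_disj)
  fix \<eta> :: real
  assume "0 < \<eta>"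
  have b: "b \<ge> 1" using assms(1) by simp
  have "0 \<le> \<gamma>" using assms(2) by (smt (verit) divide_nonneg_nonneg of_nat_0_le_iff)
  from \<open>0 < \<eta>\<close> b assms(8)
  have "(k, l) \<in> E1_eps b \<gamma> psi xs (2 * pi * \<eta>) (4 * pi^2 / real b * \<eta>)"
    unfolding E1_def by auto
  then obtain u v where
    "tangent b \<gamma> psi (2 * pi * \<eta>) (4 * pi^2 / real b * \<eta>) xs (prepend k u) (prepend l v)"
    unfolding E1_eps_def by auto
  from first_digits_bound_of_tangent[OF b \<open>0 \<le> \<gamma>\<close> assms(3) _ this, of \<kappa>] assms(9)
  show "\<bar>cos (2*pi*(xs + real k) / real b) - cos (2*pi*(xs + real l) / real b)\<bar>
           \<le> 2 * \<gamma> * sqrt (1 - \<kappa>^2) / real b + 2 * \<gamma>^2 / (real b * (real b - \<gamma>)) + \<eta>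
       \<or> \<bar>sin (2*pi*(xs + real k) / real b) - sin (2*pi*(xs + real l) / real b)\<bar>
           \<le> 2 * \<kappa> * \<gamma> + 2 * \<gamma>^2 / (1 - \<gamma>) + \<eta>"
    by simp
qed

end
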